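(* There exists no ideal test, i.e., no test that is ideal with respect to the set $F$ of all forecasting strategies.
   Context: Let $\Omega=\{0,1\}$, $\Omega^\infty$ the set of infinite sequences $\omega=(\omega_1,\omega_2,\dots)$, and $\omega^t=(\omega_1,\dots,\omega_t)$ (also used for the cylinder set of all sequences with this prefix; $\omega^0=\emptyset$). $\mathcal G_t$ is the $\sigma$-algebra generated by the length-$t$ cylinders and $\mathcal G_\infty$ the $\sigma$-algebra generated by all cylinders. $\Delta(\Omega)$ is the set of probability distributions on $\Omega$; for $p\in\Delta(\Omega)$ and $x\in\Omega$, $p[x]$ is the probability of $x$. A forecasting strategy is a map $f:\bigcup_{t\ge0}(\Omega\times\Delta(\Omega)\times\Delta(\Omega))^t\to\Delta(\Omega)$; $F$ is the set of all forecasting strategies. Given an ordered pair $\vec f=(f,g)\in F\times F$ and $\omega\in\Omega^\infty$, the play path $(\omega,\vec f)$ is defined recursively: $(\omega,\vec f)^0=\emptyset$ and its $t$-th entry is $(\omega_t,f((\omega,\vec f)^{t-1}),g((\omega,\vec f)^{t-1}))$. The pair $\vec f$ induces two probability measures on $(\Omega^\infty,\mathcal G_\infty)$, again denoted $f$ and $g$, determined by $f(\omega^t)=\prod_{n=1}^t f((\omega,\vec f)^{n-1})[\omega_n]$ and $g(\omega^t)=\prod_{n=1}^t g((\omega,\vec f)^{n-1})[\omega_n]$. A (cardinal comparison) test is a sequence $T=(T_t)_{t>0}$ of $\mathcal G_t$-measurable functions $T_t:(\Omega\times\Delta(\Omega)\times\Delta(\Omega))^\infty\to[0,1]$; write $T_t(\omega,\vec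 f)=T_t((\omega,\vec f))$. Let $A^{\vec f}_{T,f}=\{\omega: T_t(\omega,\vec f)\to1\}$ and $A^{\vec f}_{T,g}=\{\omega: T_t(\omega,\vec f)\to0\}$. A test $T$ is ideal with respect to $A\subseteq F$ if for all $f,g\in A$ with $g\ne f$, writing $\vec f=(f,g)$, $f(A^{\vec f}_{T,f})=g(A^{\vec f}_{T,g})=1$ (measures induced by $\vec f$). $T$ is ideal if it is ideal with respect to $F$. *)

theory Defs
  imports "HOL-Probability.Probability"
begin

text \<open>Omega = bool; Delta(Omega) = bool pmf; p[x] = pmf p x.
  An entry of a play path is (omega_t, forecast of f, forecast of g).\<close>

type_synonym entry = "bool \<times> bool pmf \<times> bool pmf"

type_synonym strategy = "entry list \<Rightarrow> bool pmf"

text \<open>Prefix of length t of the play path (omega, (f,g)); sequences omega are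
  0-indexed, so omega n is the (n+1)-th outcome.\<close>
fun hist :: "(nat \<Rightarrow> bool) \<Rightarrow> strategy \<Rightarrow> strategy \<Rightarrow> nat \<Rightarrow> entry list" where
  "hist \<omega> f g 0 = []"
| "hist \<omega> f g (Suc n) =
     hist \<omega> f g n @ [(\<omega> n, f (hist \<omega> f g n), g (hist \<omega> f g n))]"

definition seq_space :: "(nat \<Rightarrow> bool) measure" where
  "seq_space = PiM UNIV (\<lambda>_. count_space UNIV)"

definition cyl :: "(nat \<Rightarrow> bool) \<Rightarrow> nat \<Rightarrow> (nat \<Rightarrow> bool) set" where
  "cyl \<omega> t = {\<omega>'. \<forall>i<t. \<omega>' i = \<omega> i}"

text \<open>M is the probability measure induced by the pair (f,g) using the
  forecasts of p (p = f or p = g):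
  M(omega^t) = prod_{n<t} p((omega,(f,g))^n)[omega_{n+1}].\<close>
definition induced :: "strategy \<Rightarrow> strategy \<Rightarrow> strategy \<Rightarrow> (nat \<Rightarrow> bool) measure \<Rightarrow> bool" where
  "induced f g p M \<longleftrightarrow> sets M = sets seq_space \<and> prob_space M \<and>
     (\<forall>\<omega> t. emeasure M (cyl \<omega> t) =
        ennreal (\<Prod>n<t. pmf (p (hist \<omega> f g n)) (\<omega> n)))"

text \<open>A test: T t applied to the length-t prefix of the play path (G_t-measurability),
  with values in [0,1].\<close>
definition is_test :: "(nat \<Rightarrow> entry list \<Rightarrow> real) \<Rightarrow> bool" where
  "is_test T \<longleftrightarrow> (\<forall>t h. 0 \<le> T t h \<and> T t h \<le> 1)"

definition A_f :: "(nat \<Rightarrow> entry list \<Rightarrow> real) \<Rightarrow> strategy \<Rightarrow> strategy \<Rightarrow> (nat \<Rightarrow> bool) set" where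
  "A_f T f g = {\<omega>. (\<lambda>t. T t (hist \<omega> f g t)) \<longlonglongrightarrow> 1}"

definition A_g :: "(nat \<Rightarrow> entry list \<Rightarrow> real) \<Rightarrow> strategy \<Rightarrow> strategy \<Rightarrow> (nat \<Rightarrow> bool) set" where
  "A_g T f g = {\<omega>. (\<lambda>t. T t (hist \<omega> f g t)) \<longlonglongrightarrow> 0}"

definition ideal_wrt :: "strategy set \<Rightarrow> (nat \<Rightarrow> entry list \<Rightarrow> real) \<Rightarrow> bool" where
  "ideal_wrt S T \<longleftrightarrow> (\<forall>f\<in>S. \<forall>g\<in>S. g \<noteq> f \<longrightarrow>
      (\<forall>M. induced f g f M \<longrightarrow> emeasure M (A_f T f g) = 1) \<and>
      (\<forall>M. induced f g g M \<longrightarrow> emeasure M (A_g T f g) = 1))"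

definition ideal :: "(nat \<Rightarrow> entry list \<Rightarrow> real) \<Rightarrow> bool" where
  "ideal T \<longleftrightarrow> ideal_wrt UNIV T"

end

theory Submission
  imports Defs
begin

text \<open>A strategy only matters through the forecasts it makes along play paths. Take f
  always forecasting False, and g agreeing with f except after histories whose first
  f-forecast is not False, which never occur on a play path of (f, g). Then g \<noteq> f, yet
  f and g induce the same measure, so an ideal test would have to converge to 1 and to 0
  on events of probability one under the same measure.\<close>

lemma space_seq_space [simp]: "space seq_space = UNIV"
  unfolding seq_space_def by (simp add: space_PiM)

lemma cyl_in_seq_space [measurable]: "cyl \<omega> t \<in> sets seq_space"
proof -
  have "Measurable.pred seq_space (\<lambda>\<omega>'. \<forall>i<t. \<omega>' i = \<omega> i)"
    unfolding seq_space_def by measurable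
  then show ?thesis unfolding cyl_def pred_def by simp
qed

lemma A_f_A_g_disjoint: "A_f T f g \<inter> A_g T f g = {}"
  unfolding A_f_def A_g_def using LIMSEQ_unique by fastforce

lemma (in prob_space) emeasure_one_events_intersect:
  assumes "emeasure M A = 1" and "emeasure M B = 1"
  shows "A \<inter> B \<noteq> {}"
proof
  assume disj: "A \<inter> B = {}"
  have "A \<in> events" and "B \<in> events"
    using assms emeasure_notin_sets by fastforce+
  then have "emeasure M (A \<union> B) = 2"
    using disj assms by (simp add: plus_emeasure[symmetric] one_add_one)
  moreover have "emeasure M (A \<union> B) \<le> 1"
    using \<open>A \<in> events\<close> \<open>B \<in> events\<close> by (simp add: emeasure_space_1[symmetric] emeasure_space)
  ultimately show False by simp
qed

lemma induced_cong_on_paths: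
  assumes "\<And>\<omega> n. g (hist \<omega> f g n) = f (hist \<omega> f g n)"
  shows "induced f g g M \<longleftrightarrow> induced f g f M"
  unfolding induced_def by (simp add: assms)

lemma not_ideal_wrt_if_agree_on_paths:
  assumes "f \<in> S" "g \<in> S" "g \<noteq> f"
    and agree: "\<And>\<omega> n. g (hist \<omega> f g n) = f (hist \<omega> f g n)"
    and M: "induced f g f M"
  shows "\<not> ideal_wrt S T"
proof
  assume "ideal_wrt S T"
  then have "emeasure M (A_f T f g) = 1" and "emeasure M (A_g T f g) = 1"
    using assms induced_cong_on_paths[of g f, OF agree] unfolding ideal_wrt_def by blast+
  moreover have "prob_space M"
    using M unfolding induced_def by blast
  ultimately show False
    using prob_space.emeasure_one_events_intersect A_f_A_g_disjoint by blast
qed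

definition always :: "bool \<Rightarrow> strategy" where
  "always b = (\<lambda>_. return_pmf b)"

definition deviant :: "bool \<Rightarrow> strategy" where
  "deviant b = (\<lambda>h. if h \<noteq> [] \<and> fst (snd (hd h)) \<noteq> return_pmf b
                    then return_pmf (\<not> b) else return_pmf b)"

lemma induced_always: "induced (always b) g (always b) (return seq_space (\<lambda>_. b))"
proof -
  have "(\<Prod>n<t. pmf (always b (hist \<omega> (always b) g n)) (\<omega> n)) = indicator (cyl \<omega> t) (\<lambda>_. b)"
    for \<omega> t
    by (induction t) (auto simp: always_def pmf_return cyl_def indicator_def less_Suc_eq)
  then show ?thesis
    unfolding induced_def by (simp add: prob_space_return emeasure_return indicator_def)
qed

lemma hist_forecasts_always: "x \<in> set (hist \<omega> (always b) g n) \<Longrightarrow> fst (snd x) = return_pmf b"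
  by (induction n) (auto simp: always_def)

lemma deviant_agrees_on_paths:
  "deviant b (hist \<omega> (always b) g n) = always b (hist \<omega> (always b) g n)"
  using hist_forecasts_always[OF hd_in_set] by (auto simp: deviant_def always_def)

lemma deviant_ne_always: "deviant b \<noteq> always b"
proof
  assume "deviant b = always b"
  then have "deviant b [(b, return_pmf (\<not> b), return_pmf b)] = always b []" by (simp add: always_def)
  then show False by (simp add: deviant_def always_def)
qed

theorem mainTheorem11:
  shows "\<not> (\<exists>T. is_test T \<and> ideal T)"
  using not_ideal_wrt_if_agree_on_paths[OF UNIV_I UNIV_I deviant_ne_always
      deviant_agrees_on_paths induced_always]
  unfolding ideal_def by blast

end
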